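(* Let $\mathcal A$ be the non-associative algebra whose atoms are $e,e',a,\breve a$, with identity $1'=e+e'$, $e,e'$ self-converse, $a$ and $\breve a$ converses of each other, and composition of atoms given by: $e;e=e$, $e;e'=0$, $e;a=a$, $e;\breve a=0$; $e';e=0$, $e';e'=e'$, $e';a=0$, $e';\breve a=\breve a$; $a;e=0$, $a;e'=a$, $a;a=a$, $a;\breve a=a+\breve a+e$; $\breve a;e=\breve a$, $\breve a;e'=0$, $\breve a;a=a+\breve a+e'$, $\breve a;\breve a=\breve a$ (extended to all elements by additivity; $\mathcal A$ is the complex algebra of this atom structure). Then $\mathcal A$ is a non-associative algebra which is not associative, has a feeble representation (e.g. over the base $\{0,1\}$ with $e\mapsto\{(0,0)\}$, $e'\mapsto\{(1,1)\}$, $a\mapsto\{(0,1)\}$, $\breve a\mapsto\{(1,0)\}$), but has no qualitative representation.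
   Context: A non-associative algebra is an algebra $(A,0,1,+,-,1',\breve{\ },;)$ such that $(A,0,1,+,-)$ is a boolean algebra (with $x\cdot y=-(-x+-y)$, $x\le y\iff x+y=y$); $1';x=x=x;1'$, $\breve{\breve x}=x$, $(x;y)\breve{}=\breve y;\breve x$; $\breve 0=x;0=0$, $(x+y)\breve{}=\breve x+\breve y$, $x;(y+z)=x;y+x;z$; and the Peircean law: $x;y\cdot\breve z=0$ iff $y;z\cdot\breve x=0$. For a map $\phi:A\to\wp(D\times D)$ consider the conditions: $\phi$ injective, $0^\phi=\varnothing$, $1^\phi=D\times D$, $(1')^\phi=\{(x,x):x\in D\}$, $(a+b)^\phi=a^\phi\cup b^\phi$, $(-a)^\phi=(D\times D)\setminus a^\phi$, $(\breve a)^\phi=\{(y,x):(x,y)\in a^\phi\}$. Such $\phi$ is a feeble representation if also $(a;b)^\phi\supseteq a^\phi\circ b^\phi$ for all $a,b$, and a qualitative representation if also $c^\phi\supseteq a^\phi\circ b^\phi\iff c\ge a;b$ for all $a,b,c$ ($\circ$ is relational composition). *)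

theory Defs
  imports Main
begin

record 'a na_struct =
  nzero :: 'a
  none :: 'a
  nplus :: "'a \<Rightarrow> 'a \<Rightarrow> 'a"
  nminus :: "'a \<Rightarrow> 'a"
  nid :: 'a
  nconv :: "'a \<Rightarrow> 'a"
  ncomp :: "'a \<Rightarrow> 'a \<Rightarrow> 'a"

definition nmeet :: "('a, 'b) na_struct_scheme \<Rightarrow> 'a \<Rightarrow> 'a \<Rightarrow> 'a" where
  "nmeet S x y = nminus S (nplus S (nminus S x) (nminus S y))"

definition nle :: "('a, 'b) na_struct_scheme \<Rightarrow> 'a \<Rightarrow> 'a \<Rightarrow> bool" where
  "nle S x y \<longleftrightarrow> nplus S x y = y"

definition boolean_alg :: "('a, 'b) na_struct_scheme \<Rightarrow> bool" where
  "boolean_alg S \<longleftrightarrow>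
     (\<forall>x y z. nplus S x (nplus S y z) = nplus S (nplus S x y) z) \<and>
     (\<forall>x y z. nmeet S x (nmeet S y z) = nmeet S (nmeet S x y) z) \<and>
     (\<forall>x y. nplus S x y = nplus S y x) \<and>
     (\<forall>x y. nmeet S x y = nmeet S y x) \<and>
     (\<forall>x y. nplus S x (nmeet S x y) = x) \<and>
     (\<forall>x y. nmeet S x (nplus S x y) = x) \<and>
     (\<forall>x y z. nmeet S x (nplus S y z) = nplus S (nmeet S x y) (nmeet S x z)) \<and>
     (\<forall>x. nplus S x (nzero S) = x) \<and>
     (\<forall>x. nmeet S x (none S) = x) \<and>
     (\<forall>x. nplus S x (nminus S x) = none S) \<and>
     (\<forall>x. nmeet S x (nminus S x) = nzero S)"

definition na_algebra :: "('a, 'b) na_struct_scheme \<Rightarrow> bool" where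
  "na_algebra S \<longleftrightarrow> boolean_alg S \<and>
     (\<forall>x. ncomp S (nid S) x = x \<and> ncomp S x (nid S) = x) \<and>
     (\<forall>x. nconv S (nconv S x) = x) \<and>
     (\<forall>x y. nconv S (ncomp S x y) = ncomp S (nconv S y) (nconv S x)) \<and>
     nconv S (nzero S) = nzero S \<and>
     (\<forall>x. ncomp S x (nzero S) = nzero S) \<and>
     (\<forall>x y. nconv S (nplus S x y) = nplus S (nconv S x) (nconv S y)) \<and>
     (\<forall>x y z. ncomp S x (nplus S y z) = nplus S (ncomp S x y) (ncomp S x z)) \<and>
     (\<forall>x y z. nmeet S (ncomp S x y) (nconv S z) = nzero S \<longleftrightarrow>
              nmeet S (ncomp S y z) (nconv S x) = nzero S)"

definition na_associative :: "('a, 'b) na_struct_scheme \<Rightarrow> bool" where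
  "na_associative S \<longleftrightarrow> (\<forall>x y z. ncomp S x (ncomp S y z) = ncomp S (ncomp S x y) z)"

definition proper_map :: "('a, 'b) na_struct_scheme \<Rightarrow> 'c set \<Rightarrow> ('a \<Rightarrow> ('c \<times> 'c) set) \<Rightarrow> bool" where
  "proper_map S D \<phi> \<longleftrightarrow>
     inj \<phi> \<and>
     \<phi> (nzero S) = {} \<and>
     \<phi> (none S) = D \<times> D \<and>
     \<phi> (nid S) = {(x, x) | x. x \<in> D} \<and>
     (\<forall>a b. \<phi> (nplus S a b) = \<phi> a \<union> \<phi> b) \<and>
     (\<forall>a. \<phi> (nminus S a) = (D \<times> D) - \<phi> a) \<and>
     (\<forall>a. \<phi> (nconv S a) = {(y, x). (x, y) \<in> \<phi> a})"

definition feeble_rep :: "('a, 'b) na_struct_scheme \<Rightarrow> 'c set \<Rightarrow> ('a \<Rightarrow> ('c \<times> 'c) set) \<Rightarrow> bool" where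
  "feeble_rep S D \<phi> \<longleftrightarrow> proper_map S D \<phi> \<and>
     (\<forall>a b. \<phi> a O \<phi> b \<subseteq> \<phi> (ncomp S a b))"

definition qualitative_rep :: "('a, 'b) na_struct_scheme \<Rightarrow> 'c set \<Rightarrow> ('a \<Rightarrow> ('c \<times> 'c) set) \<Rightarrow> bool" where
  "qualitative_rep S D \<phi> \<longleftrightarrow> proper_map S D \<phi> \<and>
     (\<forall>a b c. \<phi> a O \<phi> b \<subseteq> \<phi> c \<longleftrightarrow> nle S (ncomp S a b) c)"

datatype atom = E | E' | At | Atc

fun conv_at :: "atom \<Rightarrow> atom" where
  "conv_at E = E" | "conv_at E' = E'" | "conv_at At = Atc" | "conv_at Atc = At"

fun comp_at :: "atom \<Rightarrow> atom \<Rightarrow> atom set" where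
  "comp_at E E = {E}" | "comp_at E E' = {}" | "comp_at E At = {At}" | "comp_at E Atc = {}"
| "comp_at E' E = {}" | "comp_at E' E' = {E'}" | "comp_at E' At = {}" | "comp_at E' Atc = {Atc}"
| "comp_at At E = {}" | "comp_at At E' = {At}" | "comp_at At At = {At}" | "comp_at At Atc = {At, Atc, E}"
| "comp_at Atc E = {Atc}" | "comp_at Atc E' = {}" | "comp_at Atc At = {At, Atc, E'}" | "comp_at Atc Atc = {Atc}"

definition cA :: "atom set na_struct" where
  "cA = \<lparr> nzero = {}, none = UNIV, nplus = (\<union>), nminus = uminus, nid = {E, E'},
          nconv = (\<lambda>X. conv_at ` X),
          ncomp = (\<lambda>X Y. \<Union>{comp_at x y | x y. x \<in> X \<and> y \<in> Y}) \<rparr>"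

end

theory Submission
  imports Defs
begin

text \<open>The non-associative algebra laws of a complex algebra reduce to laws of its atom
  structure, which for the four atoms are checked by case distinction. Associativity fails
  already on atoms: \<open>e;(a;\<breve>a)\<close> omits \<open>\<breve>a\<close>, whereas \<open>(e;a);\<breve>a = a;\<breve>a\<close> contains it.
  The two-point representation sends the atoms bijectively onto the pairs over \<open>{0,1}\<close>,
  compatibly with converse, and every composable pair of pairs is realised inside the composite
  of the atoms, so it is feeble. A qualitative representation cannot exist:
  since \<open>a \<le> a;\<breve>a\<close>, it must realise pairs \<open>(x,y) \<in> a\<close>, \<open>(y,z) \<in> \<breve>a\<close> with \<open>(x,z) \<in> a\<close>; the loop
  \<open>(z,z)\<close> lies in \<open>e\<close> or \<open>e'\<close>, but \<open>e';a = 0\<close> excludes \<open>e'\<close> because \<open>(z,y) \<in> a\<close>, and \<open>a;e = 0\<close>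
  excludes \<open>e\<close> because \<open>(x,z) \<in> a\<close>.\<close>

definition complex_algebra ::
    "('a \<Rightarrow> 'a) \<Rightarrow> ('a \<Rightarrow> 'a \<Rightarrow> 'a set) \<Rightarrow> 'a set \<Rightarrow> 'a set na_struct" where
  "complex_algebra conv cmp I =
     \<lparr> nzero = {}, none = UNIV, nplus = (\<union>), nminus = uminus, nid = I,
       nconv = (\<lambda>X. conv ` X),
       ncomp = (\<lambda>X Y. \<Union>{cmp x y | x y. x \<in> X \<and> y \<in> Y}) \<rparr>"

lemma complex_algebra_simps [simp]:
  "nzero (complex_algebra conv cmp I) = {}"
  "none (complex_algebra conv cmp I) = UNIV"
  "nplus (complex_algebra conv cmp I) = (\<union>)"
  "nminus (complex_algebra conv cmp I) = uminus"
  "nid (complex_algebra conv cmp I) = I"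
  "nconv (complex_algebra conv cmp I) = (\<lambda>X. conv ` X)"
  by (simp_all add: complex_algebra_def)

lemma ncomp_complex_algebra [simp]:
  "ncomp (complex_algebra conv cmp I) X Y = {z. \<exists>x\<in>X. \<exists>y\<in>Y. z \<in> cmp x y}"
  by (auto simp: complex_algebra_def)

lemma nmeet_complex_algebra [simp]: "nmeet (complex_algebra conv cmp I) X Y = X \<inter> Y"
  by (auto simp: nmeet_def)

lemma nle_complex_algebra [simp]: "nle (complex_algebra conv cmp I) X Y \<longleftrightarrow> X \<subseteq> Y"
  by (auto simp: nle_def)

lemma na_algebra_complex_algebra:
  assumes conv_conv: "\<And>x. conv (conv x) = x"
    and id_left: "\<And>x z. (\<exists>i\<in>I. z \<in> cmp i x) \<longleftrightarrow> z = x"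
    and id_right: "\<And>x z. (\<exists>i\<in>I. z \<in> cmp x i) \<longleftrightarrow> z = x"
    and conv_comp: "\<And>x y z. conv z \<in> cmp x y \<longleftrightarrow> z \<in> cmp (conv y) (conv x)"
    and peirce: "\<And>x y z. conv z \<in> cmp x y \<longleftrightarrow> conv x \<in> cmp y z"
  shows "na_algebra (complex_algebra conv cmp I)"
proof -
  let ?S = "complex_algebra conv cmp I"
  have conv_image_iff: "w \<in> conv ` X \<longleftrightarrow> conv w \<in> X" for w X
    by (metis conv_conv image_iff)
  have id_left_set: "ncomp ?S I X = X" for X
  proof -
    have "ncomp ?S I X = {z. \<exists>x\<in>X. \<exists>i\<in>I. z \<in> cmp i x}" by auto
    then show ?thesis by (simp add: id_left)
  qed
  have id_right_set: "ncomp ?S X I = X" for X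
    by (simp add: id_right)
  have conv_comp_set: "conv ` ncomp ?S X Y = ncomp ?S (conv ` Y) (conv ` X)" for X Y
  proof (rule set_eqI)
    fix w
    have "w \<in> conv ` ncomp ?S X Y \<longleftrightarrow> (\<exists>x\<in>X. \<exists>y\<in>Y. w \<in> cmp (conv y) (conv x))"
      by (simp add: conv_image_iff conv_comp)
    also have "\<dots> \<longleftrightarrow> w \<in> ncomp ?S (conv ` Y) (conv ` X)"
      by auto
    finally show "w \<in> conv ` ncomp ?S X Y \<longleftrightarrow> w \<in> ncomp ?S (conv ` Y) (conv ` X)" .
  qed
  have disjoint_iff: "ncomp ?S X Y \<inter> conv ` Z = {} \<longleftrightarrow> \<not> (\<exists>x\<in>X. \<exists>y\<in>Y. \<exists>z\<in>Z. conv z \<in> cmp x y)"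
    for X Y Z
    unfolding ncomp_complex_algebra by blast
  have peirce_set: "ncomp ?S X Y \<inter> conv ` Z = {} \<longleftrightarrow> ncomp ?S Y Z \<inter> conv ` X = {}" for X Y Z
    unfolding disjoint_iff using peirce by blast
  show ?thesis
    unfolding na_algebra_def
  proof (intro conjI allI)
    show "boolean_alg ?S"
      unfolding boolean_alg_def by auto
    fix X Y Z
    show "ncomp ?S (nid ?S) X = X" "ncomp ?S X (nid ?S) = X"
      using id_left_set[of X] id_right_set[of X] by (simp_all only: complex_algebra_simps)
    show "nconv ?S (nconv ?S X) = X"
      by (simp add: image_image conv_conv)
    show "nconv ?S (ncomp ?S X Y) = ncomp ?S (nconv ?S Y) (nconv ?S X)"
      using conv_comp_set[of X Y] by (simp only: complex_algebra_simps)
    show "nconv ?S (nzero ?S) = nzero ?S" "ncomp ?S X (nzero ?S) = nzero ?S"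
      by simp_all
    show "nconv ?S (nplus ?S X Y) = nplus ?S (nconv ?S X) (nconv ?S Y)"
      by (simp add: image_Un)
    show "ncomp ?S X (nplus ?S Y Z) = nplus ?S (ncomp ?S X Y) (ncomp ?S X Z)"
      by auto
    show "nmeet ?S (ncomp ?S X Y) (nconv ?S Z) = nzero ?S \<longleftrightarrow>
        nmeet ?S (ncomp ?S Y Z) (nconv ?S X) = nzero ?S"
      using peirce_set[of X Y Z] by (simp only: complex_algebra_simps nmeet_complex_algebra)
  qed
qed

lemma feeble_rep_complex_algebra:
  assumes bij: "bij_betw f UNIV (D \<times> D)"
    and f_conv: "\<And>x. f (conv x) = prod.swap (f x)"
    and f_id: "f ` I = {(x, x) | x. x \<in> D}"
    and f_comp: "\<And>x y. snd (f x) = fst (f y) \<Longrightarrow> (fst (f x), snd (f y)) \<in> f ` cmp x y"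
  shows "feeble_rep (complex_algebra conv cmp I) D (image f)"
proof -
  have inj: "inj f" and range: "range f = D \<times> D"
    using bij by (auto simp: bij_betw_def)
  have "inj (image f)"
    by (meson inj inj_image_eq_iff injI)
  moreover have "f ` (- X) = D \<times> D - f ` X" for X
    by (metis Compl_eq_Diff_UNIV image_set_diff inj range)
  moreover have "f ` conv ` X = {(y, x). (x, y) \<in> f ` X}" for X
  proof -
    have swap_converse: "prod.swap ` R = R\<inverse>" for R
      by auto
    have "f ` conv ` X = prod.swap ` f ` X"
      by (simp add: image_image f_conv)
    then show ?thesis
      by (metis swap_converse converse_unfold)
  qed
  moreover have "f ` X O f ` Y \<subseteq> f ` ncomp (complex_algebra conv cmp I) X Y" for X Y
  proof
    fix p assume "p \<in> f ` X O f ` Y"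
    then obtain a b c where p: "p = (a, c)" and "(a, b) \<in> f ` X" "(b, c) \<in> f ` Y"
      by blast
    then obtain x y where "x \<in> X" "y \<in> Y" "f x = (a, b)" "f y = (b, c)"
      by (metis imageE)
    with f_comp[of x y] obtain z where "z \<in> cmp x y" "p = f z"
      using p by auto
    with \<open>x \<in> X\<close> \<open>y \<in> Y\<close> show "p \<in> f ` ncomp (complex_algebra conv cmp I) X Y"
      by auto
  qed
  ultimately show ?thesis
    unfolding feeble_rep_def proper_map_def by (simp add: f_id range image_Un)
qed

lemma proper_map_complex_algebraD:
  assumes "proper_map (complex_algebra conv cmp I) D \<phi>"
  shows "\<phi> {} = {}" and "\<phi> (A \<union> B) = \<phi> A \<union> \<phi> B" and "\<phi> (- A) = D \<times> D - \<phi> A"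
    and "\<phi> I = {(x, x) | x. x \<in> D}" and "\<phi> (conv ` A) = (\<phi> A)\<inverse>" and "\<phi> A \<subseteq> D \<times> D"
proof -
  have \<phi>: "\<phi> {} = {}" "\<phi> UNIV = D \<times> D" "\<And>A B. \<phi> (A \<union> B) = \<phi> A \<union> \<phi> B"
    "\<And>A. \<phi> (- A) = D \<times> D - \<phi> A" "\<phi> I = {(x, x) | x. x \<in> D}"
    "\<And>A. \<phi> (conv ` A) = {(y, x). (x, y) \<in> \<phi> A}"
    using assms unfolding proper_map_def by simp_all
  then show "\<phi> {} = {}" "\<phi> (A \<union> B) = \<phi> A \<union> \<phi> B" "\<phi> (- A) = D \<times> D - \<phi> A"
    "\<phi> I = {(x, x) | x. x \<in> D}" "\<phi> (conv ` A) = (\<phi> A)\<inverse>"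
    by (simp_all add: converse_unfold)
  have "\<phi> A \<union> \<phi> (- A) = \<phi> UNIV"
    using \<phi>(3)[of A "- A"] by simp
  then show "\<phi> A \<subseteq> D \<times> D"
    using \<phi>(2) by blast
qed

lemma cA_eq_complex_algebra: "cA = complex_algebra conv_at comp_at {E, E'}"
  by (simp add: cA_def complex_algebra_def)

lemma UNIV_atom: "(UNIV :: atom set) = {E, E', At, Atc}"
  using atom.exhaust by blast

lemma na_algebra_cA: "na_algebra cA"
  unfolding cA_eq_complex_algebra
proof (rule na_algebra_complex_algebra)
  fix x y z
  show "conv_at (conv_at x) = x" by (cases x) auto
  show "(\<exists>i\<in>{E, E'}. z \<in> comp_at i x) \<longleftrightarrow> z = x" by (cases x; cases z) auto
  show "(\<exists>i\<in>{E, E'}. z \<in> comp_at x i) \<longleftrightarrow> z = x" by (cases x; cases z) auto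
  show "conv_at z \<in> comp_at x y \<longleftrightarrow> z \<in> comp_at (conv_at y) (conv_at x)"
    by (cases x; cases y; cases z) auto
  show "conv_at z \<in> comp_at x y \<longleftrightarrow> conv_at x \<in> comp_at y z"
    by (cases x; cases y; cases z) auto
qed

lemma not_na_associative_cA: "\<not> na_associative cA"
proof
  assume "na_associative cA"
  then have assoc: "ncomp cA {E} (ncomp cA {At} {Atc}) = ncomp cA (ncomp cA {E} {At}) {Atc}"
    unfolding na_associative_def by blast
  have "Atc \<notin> comp_at E y" for y
    by (cases y) auto
  then have "Atc \<notin> ncomp cA {E} (ncomp cA {At} {Atc})"
    by (simp add: cA_eq_complex_algebra)
  moreover have "ncomp cA {E} {At} = {At}"
    by (simp add: cA_eq_complex_algebra)
  then have "Atc \<in> ncomp cA (ncomp cA {E} {At}) {Atc}"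
    by (simp add: cA_eq_complex_algebra)
  ultimately show False
    using assoc by simp
qed

fun atom_pair :: "atom \<Rightarrow> nat \<times> nat" where
  "atom_pair E = (0, 0)" | "atom_pair E' = (1, 1)"
| "atom_pair At = (0, 1)" | "atom_pair Atc = (1, 0)"

lemma feeble_rep_cA: "feeble_rep cA {0, 1} (image atom_pair)"
  unfolding cA_eq_complex_algebra
proof (rule feeble_rep_complex_algebra)
  show "bij_betw atom_pair UNIV ({0, 1} \<times> {0, 1})"
    unfolding bij_betw_def
  proof
    show "inj atom_pair"
    proof (rule injI)
      show "atom_pair x = atom_pair y \<Longrightarrow> x = y" for x y
        by (cases x; cases y) auto
    qed
    show "range atom_pair = {0, 1} \<times> {0, 1}"
      by (auto simp: UNIV_atom)
  qed
  show "atom_pair ` {E, E'} = {(x, x) | x. x \<in> {0, 1}}" by auto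
  fix x y
  show "atom_pair (conv_at x) = prod.swap (atom_pair x)" by (cases x) auto
  show "snd (atom_pair x) = fst (atom_pair y) \<Longrightarrow>
      (fst (atom_pair x), snd (atom_pair y)) \<in> atom_pair ` comp_at x y"
    by (cases x; cases y) auto
qed

lemma not_qualitative_rep_cA: "\<not> qualitative_rep cA D \<phi>"
proof
  assume "qualitative_rep cA D \<phi>"
  then have proper: "proper_map (complex_algebra conv_at comp_at {E, E'}) D \<phi>"
    and qual: "\<And>a b c. \<phi> a O \<phi> b \<subseteq> \<phi> c \<longleftrightarrow> ncomp cA a b \<subseteq> c"
    by (simp_all add: qualitative_rep_def cA_eq_complex_algebra)
  note \<phi> = proper_map_complex_algebraD[OF proper]
  have comp_empty: "\<phi> a O \<phi> b = {}" if "ncomp cA a b = {}" for a b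
    using qual[of a b "{}"] \<phi>(1) that by simp
  have "At \<in> ncomp cA {At} {Atc}"
    by (simp add: cA_eq_complex_algebra)
  then have "\<not> \<phi> {At} O \<phi> {Atc} \<subseteq> \<phi> (- {At})"
    using qual[of "{At}" "{Atc}" "- {At}"] by blast
  then obtain x y z where xy: "(x, y) \<in> \<phi> {At}" and yz: "(y, z) \<in> \<phi> {Atc}"
    and xz: "(x, z) \<notin> \<phi> (- {At})"
    by blast
  have xz_At: "(x, z) \<in> \<phi> {At}"
    using xz \<phi>(3,6) xy yz by blast
  have zy_At: "(z, y) \<in> \<phi> {At}"
    using yz \<phi>(5)[of "{At}"] by simp
  have "{E, E'} = {E} \<union> {E'}"
    by blast
  then have "\<phi> {E, E'} = \<phi> {E} \<union> \<phi> {E'}"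
    using \<phi>(2) by metis
  moreover have "(z, z) \<in> \<phi> {E, E'}"
    using \<phi>(4,6) zy_At by blast
  ultimately have "(z, z) \<in> \<phi> {E} \<union> \<phi> {E'}"
    by simp
  moreover have "(z, z) \<notin> \<phi> {E'}"
    using comp_empty[of "{E'}" "{At}"] zy_At by (auto simp: cA_eq_complex_algebra)
  moreover have "(z, z) \<notin> \<phi> {E}"
    using comp_empty[of "{At}" "{E}"] xz_At by (auto simp: cA_eq_complex_algebra)
  ultimately show False by blast
qed

theorem mainTheorem13:
  shows "na_algebra cA \<and> \<not> na_associative cA \<and>
         (\<exists>(D :: nat set) \<phi>. feeble_rep cA D \<phi>) \<and>
         \<not> (\<exists>(D :: 'b set) (\<phi> :: atom set \<Rightarrow> ('b \<times> 'b) set). qualitative_rep cA D \<phi>)"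
  using na_algebra_cA not_na_associative_cA feeble_rep_cA not_qualitative_rep_cA by blast

end
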